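(* Let $\alpha,\beta,\gamma\in\mathbb{F}\setminus\{\frac12\}$, and let $\mathbf{A}$ be the 5-dimensional LV algebra with natural basis $e_1,\dots,e_5$ in which $e_1e_2=\alpha e_1+(1-\alpha)e_2$, $e_2e_3=\beta e_2+(1-\beta)e_3$, $e_3e_4=\gamma e_3+(1-\gamma)e_4$, and $e_ie_j=\frac12(e_i+e_j)$ for all other pairs $i,j$. Then $\mathrm{Der}(\mathbf{A})=\{0\}$.
   Context: Let $\mathbb{F}$ be a field of characteristic different from $2$. A Lotka–Volterra (LV) algebra of dimension $5$ over $\mathbb{F}$ is a commutative (not necessarily associative) $\mathbb{F}$-algebra $\mathbf{A}$ with a basis $e_1,\dots,e_5$ (the natural basis) such that $e_ie_j=\alpha_{ij}e_i+\alpha_{ji}e_j$ with $\alpha_{ij}\in\mathbb{F}$, $\alpha_{ii}=\frac12$ and $\alpha_{ij}+\alpha_{ji}=1$ for all $i,j$. A derivation is a linear map $D:\mathbf{A}\to\mathbf{A}$ with $D(uv)=D(u)v+uD(v)$ for all $u,v$; $\mathrm{Der}(\mathbf{A})$ is the set of derivations. *)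

theory Defs
  imports Main
begin

text \<open>Elements of a 5-dimensional LV algebra over a field are represented by their
coordinate functions w.r.t. the natural basis e_1,...,e_5: a vector u is a function
nat => 'a with u i = 0 for i outside {1..5}; u i is the coefficient of e_i.\<close>

definition LV_space :: "(nat \<Rightarrow> 'a::field) set" where
  "LV_space = {u. \<forall>i. i \<notin> {1..5} \<longrightarrow> u i = 0}"

definition LV_basis :: "nat \<Rightarrow> nat \<Rightarrow> 'a::field" where
  "LV_basis i = (\<lambda>k. if k = i then 1 else 0)"

text \<open>The LV multiplication determined by structure constants a, i.e.
e_i e_j = a i j e_i + a j i e_j, extended bilinearly.\<close>
definition LV_mult :: "(nat \<Rightarrow> nat \<Rightarrow> 'a::field) \<Rightarrow> (nat \<Rightarrow> 'a) \<Rightarrow> (nat \<Rightarrow> 'a) \<Rightarrow> (nat \<Rightarrow> 'a)" where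
  "LV_mult a u v = (\<lambda>k. if k \<in> {1..5} then
      (\<Sum>j\<in>{1..5}. a k j * u k * v j) + (\<Sum>i\<in>{1..5}. a k i * u i * v k) else 0)"

definition is_LV_constants :: "(nat \<Rightarrow> nat \<Rightarrow> 'a::field) \<Rightarrow> bool" where
  "is_LV_constants a \<longleftrightarrow> (\<forall>i\<in>{1..5}. \<forall>j\<in>{1..5}. a i i = 1/2 \<and> a i j + a j i = 1)"

text \<open>Derivations: linear maps of the algebra into itself satisfying the Leibniz rule.
Maps are taken extensional (zero outside the carrier) so that they are determined by
their action on the algebra.\<close>
definition LV_Der :: "(nat \<Rightarrow> nat \<Rightarrow> 'a::field) \<Rightarrow> ((nat \<Rightarrow> 'a) \<Rightarrow> (nat \<Rightarrow> 'a)) set" where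
  "LV_Der a = {D. (\<forall>u\<in>LV_space. D u \<in> LV_space)
      \<and> (\<forall>u\<in>LV_space. \<forall>v\<in>LV_space. D (\<lambda>k. u k + v k) = (\<lambda>k. D u k + D v k))
      \<and> (\<forall>c. \<forall>u\<in>LV_space. D (\<lambda>k. c * u k) = (\<lambda>k. c * D u k))
      \<and> (\<forall>u\<in>LV_space. \<forall>v\<in>LV_space. D (LV_mult a u v) = (\<lambda>k. LV_mult a (D u) v k + LV_mult a u (D v) k))
      \<and> (\<forall>u. u \<notin> LV_space \<longrightarrow> D u = (\<lambda>k. 0))}"

definition chain_consts :: "'a::field \<Rightarrow> 'a \<Rightarrow> 'a \<Rightarrow> nat \<Rightarrow> nat \<Rightarrow> 'a" where
  "chain_consts al be ga i j =
     (if (i, j) = (1, 2) then al else if (i, j) = (2, 1) then 1 - al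
      else if (i, j) = (2, 3) then be else if (i, j) = (3, 2) then 1 - be
      else if (i, j) = (3, 4) then ga else if (i, j) = (4, 3) then 1 - ga
      else 1/2)"

end

theory Submission
  imports Defs
begin

text \<open>A derivation is linear, so it is zero as soon as it kills every basis vector.
Applying the Leibniz rule to \<open>e\<^sub>i e\<^sub>j\<close> and taking the \<open>e\<^sub>k\<close>-coordinate gives, for
\<open>k \<notin> {i, j}\<close>, the relation
\<open>(\<alpha>\<^sub>i\<^sub>j - \<alpha>\<^sub>k\<^sub>j) D(e\<^sub>i)\<^sub>k + (\<alpha>\<^sub>j\<^sub>i - \<alpha>\<^sub>k\<^sub>i) D(e\<^sub>j)\<^sub>k = 0\<close>, and for \<open>k = j\<close> it expresses
a weighted sum of the coordinates of \<open>D(e\<^sub>i)\<close>. Writing \<open>\<alpha> = 1/2 + p\<close>, \<open>\<beta> = 1/2 + q\<close>,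
\<open>\<gamma> = 1/2 + r\<close>, every coefficient is \<open>0\<close>, \<open>\<plusminus>p\<close>, \<open>\<plusminus>q\<close> or \<open>\<plusminus>r\<close>, and solving these
equations in a suitable order (coordinates along the chain \<open>1 - 2 - 3 - 4\<close> first, then the
other off-diagonal ones, then the \<open>e\<^sub>5\<close>-column and the diagonal) forces all 25 coordinates
of \<open>D(e\<^sub>1), \<dots>, D(e\<^sub>5)\<close> to vanish.\<close>

lemma LV_basis_in_space: "i \<in> {1..5} \<Longrightarrow> LV_basis i \<in> LV_space"
  by (auto simp: LV_space_def LV_basis_def)

lemma LV_space_scale: "u \<in> LV_space \<Longrightarrow> (\<lambda>k. c * u k) \<in> LV_space"
  by (auto simp: LV_space_def)

lemma LV_space_sum_basis: "S \<subseteq> {1..5} \<Longrightarrow> (\<lambda>k. \<Sum>i\<in>S. u i * LV_basis i k) \<in> LV_space"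
  by (force simp: LV_space_def LV_basis_def intro!: sum.neutral)

lemma LV_space_eq_sum_basis:
  assumes "u \<in> LV_space"
  shows "u = (\<lambda>k. \<Sum>i\<in>{1..5}. u i * LV_basis i k)"
  using assms by (auto simp: LV_space_def LV_basis_def if_distrib[of "\<lambda>x. _ * x"] cong: if_cong)

lemma LV_mult_basis:
  assumes "i \<in> {1..5}" "j \<in> {1..5}"
  shows "LV_mult a (LV_basis i) (LV_basis j) = (\<lambda>k. a i j * LV_basis i k + a j i * LV_basis j k)"
  using assms
  by (auto simp: LV_mult_def LV_basis_def if_distrib[of "\<lambda>x. x * _"] if_distrib[of "\<lambda>x. _ * x"]
      cong: if_cong)

lemma LV_mult_basis_right:
  assumes "j \<in> {1..5}" "k \<in> {1..5}"
  shows "LV_mult a u (LV_basis j) k = a k j * u k + (if k = j then \<Sum>m\<in>{1..5}. a k m * u m else 0)"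
  using assms by (auto simp: LV_mult_def LV_basis_def mult_ac if_distrib[of "\<lambda>x. _ * x"] cong: if_cong)

lemma LV_mult_basis_left:
  assumes "i \<in> {1..5}" "k \<in> {1..5}"
  shows "LV_mult a (LV_basis i) v k = a k i * v k + (if k = i then \<Sum>m\<in>{1..5}. a k m * v m else 0)"
  using assms
  by (auto simp: LV_mult_def LV_basis_def mult_ac if_distrib[of "\<lambda>x. x * _"] if_distrib[of "\<lambda>x. _ * x"]
      cong: if_cong)

lemma LV_Der_in_space:
  "D \<in> LV_Der a \<Longrightarrow> u \<in> LV_space \<Longrightarrow> D u \<in> LV_space"
  and LV_Der_outside_space:
  "D \<in> LV_Der a \<Longrightarrow> u \<notin> LV_space \<Longrightarrow> D u = (\<lambda>k. 0)"
  and LV_Der_add: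
  "D \<in> LV_Der a \<Longrightarrow> u \<in> LV_space \<Longrightarrow> v \<in> LV_space \<Longrightarrow> D (\<lambda>k. u k + v k) = (\<lambda>k. D u k + D v k)"
  and LV_Der_scale:
  "D \<in> LV_Der a \<Longrightarrow> u \<in> LV_space \<Longrightarrow> D (\<lambda>k. c * u k) = (\<lambda>k. c * D u k)"
  and LV_Der_Leibniz:
  "D \<in> LV_Der a \<Longrightarrow> u \<in> LV_space \<Longrightarrow> v \<in> LV_space \<Longrightarrow>
     D (LV_mult a u v) = (\<lambda>k. LV_mult a (D u) v k + LV_mult a u (D v) k)"
  by (auto simp: LV_Der_def)

lemma LV_Der_sum_basis:
  assumes D: "D \<in> LV_Der a" and S: "S \<subseteq> {1..5}"
  shows "D (\<lambda>k. \<Sum>i\<in>S. u i * LV_basis i k) = (\<lambda>k. \<Sum>i\<in>S. u i * D (LV_basis i) k)"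
proof -
  have "finite S" using S finite_subset by blast
  then show ?thesis using S
  proof (induction S rule: finite_induct)
    case empty
    show ?case using LV_Der_scale[OF D LV_basis_in_space, of 1 0] by simp
  next
    case (insert x F)
    then have x: "x \<in> {1..5}" and F: "F \<subseteq> {1..5}" by auto
    show ?case
      using insert LV_Der_add[OF D LV_space_scale[OF LV_basis_in_space[OF x]] LV_space_sum_basis[OF F]]
        LV_Der_scale[OF D LV_basis_in_space[OF x]]
      by simp
  qed
qed

lemma LV_Der_basis_coord:
  assumes D: "D \<in> LV_Der a" and ij: "i \<in> {1..5}" "j \<in> {1..5}" and k: "k \<in> {1..5}"
  shows "a i j * D (LV_basis i) k + a j i * D (LV_basis j) k =
     a k j * D (LV_basis i) k + (if k = j then \<Sum>m\<in>{1..5}. a k m * D (LV_basis i) m else 0)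
     + a k i * D (LV_basis j) k + (if k = i then \<Sum>m\<in>{1..5}. a k m * D (LV_basis j) m else 0)"
proof -
  note e = LV_basis_in_space[OF ij(1)] LV_basis_in_space[OF ij(2)]
  have "D (LV_mult a (LV_basis i) (LV_basis j)) = (\<lambda>k. a i j * D (LV_basis i) k + a j i * D (LV_basis j) k)"
    unfolding LV_mult_basis[OF ij]
    using LV_Der_add[OF D LV_space_scale[OF e(1)] LV_space_scale[OF e(2)]]
      LV_Der_scale[OF D e(1)] LV_Der_scale[OF D e(2)] by simp
  then show ?thesis
    using fun_cong[OF LV_Der_Leibniz[OF D e], of k]
    by (simp add: LV_mult_basis_right[OF ij(2) k] LV_mult_basis_left[OF ij(1) k] add_ac)
qed

lemma LV_Der_coord_apart:
  assumes "D \<in> LV_Der a" "i \<in> {1..5}" "j \<in> {1..5}" "k \<in> {1..5}" "k \<noteq> i" "k \<noteq> j"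
  shows "(a i j - a k j) * D (LV_basis i) k + (a j i - a k i) * D (LV_basis j) k = 0"
  using LV_Der_basis_coord[OF assms(1-4)] assms(5,6)
  by (simp add: left_diff_distrib) (simp add: algebra_simps)

lemma LV_Der_coord_target:
  assumes "D \<in> LV_Der a" "i \<in> {1..5}" "j \<in> {1..5}" "i \<noteq> j"
  shows "(a i j - a j j) * D (LV_basis i) j = (\<Sum>m\<in>{1..5}. a j m * D (LV_basis i) m)"
  using LV_Der_basis_coord[OF assms(1-3,3)] assms(4) by (simp add: left_diff_distrib)

lemma LV_Der_eq_zero_if_basis_coords:
  assumes D: "D \<in> LV_Der a"
    and basis: "\<And>i k. i \<in> {1..5} \<Longrightarrow> k \<in> {1..5} \<Longrightarrow> D (LV_basis i) k = 0"
  shows "D = (\<lambda>u k. 0)"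
proof
  fix u
  have Dei: "D (LV_basis i) = (\<lambda>k. 0)" if "i \<in> {1..5}" for i
  proof
    fix k
    from LV_Der_in_space[OF D LV_basis_in_space[OF that]]
    show "D (LV_basis i) k = 0"
      using basis[OF that] by (cases "k \<in> {1..5}") (auto simp: LV_space_def)
  qed
  show "D u = (\<lambda>k. 0)"
  proof (cases "u \<in> LV_space")
    case True
    have "D u = (\<lambda>k. \<Sum>i\<in>{1..5}. u i * D (LV_basis i) k)"
      using arg_cong[where f = D, OF LV_space_eq_sum_basis[OF True]]
      LV_Der_sum_basis[OF D order_refl]
    by simp
    then show ?thesis using Dei by simp
  next
    case False
    then show ?thesis using LV_Der_outside_space[OF D] by simp
  qed
qed

lemma zero_in_LV_Der: "(\<lambda>u k. 0) \<in> LV_Der a"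
  by (auto simp: LV_Der_def LV_space_def LV_mult_def)

lemma chain_Der_basis_coords_zero:
  fixes p q r :: "'a::field"
  assumes D: "D \<in> LV_Der (chain_consts (1/2 + p) (1/2 + q) (1/2 + r))"
    and "(2::'a) \<noteq> 0" "p \<noteq> 0" "q \<noteq> 0" "r \<noteq> 0"
    and "i \<in> {1..5}" "k \<in> {1..5}"
  shows "D (LV_basis i) k = 0"
proof -
  have one_minus: "1 - (1/2 + x) = 1/2 - x" for x :: 'a
    using \<open>2 \<noteq> 0\<close> by (simp add: field_simps)
  \<comment> \<open>stated with \<open>Suc 0\<close> because the simplifier rewrites \<open>{1..5}\<close> to \<open>{Suc 0..5}\<close> first\<close>
  have five: "{Suc 0..5} = {1, 2, 3, 4, 5}" by auto
  note apart = LV_Der_coord_apart[OF D] and target = LV_Der_coord_target[OF D]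
  note simps = chain_consts_def one_minus five assms(2-5)
  let ?d = "\<lambda>i. D (LV_basis i)"
  have edges: "?d 1 2 = 0" "?d 2 1 = 0" "?d 2 3 = 0" "?d 3 2 = 0" "?d 3 4 = 0" "?d 4 3 = 0"
    using apart[of 1 1 2] apart[of 2 2 1] apart[of 2 2 3] apart[of 3 3 2] apart[of 3 3 4] apart[of 4 4 3]
    by (simp_all add: simps)
  have near: "?d 1 3 = 0" "?d 1 4 = 0" "?d 4 2 = 0" "?d 5 2 = 0"
      "?d 4 1 = 0" "?d 5 1 = 0" "?d 5 3 = 0" "?d 5 4 = 0"
    using apart[of 1 4 3] apart[of 1 3 4] apart[of 1 4 2] apart[of 1 5 2]
      apart[of 2 4 1] apart[of 2 5 1] apart[of 2 5 3] apart[of 3 5 4]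
    by (simp_all add: simps)
  have far: "?d 2 4 = 0" "?d 3 1 = 0"
    using apart[of 1 2 4] apart[of 3 4 1] near by (simp_all add: simps)
  have to5: "?d 1 5 = ?d 2 5" "?d 2 5 = ?d 3 5" "?d 3 5 = ?d 4 5"
    using apart[of 1 2 5] apart[of 2 3 5] apart[of 3 4 5] by (simp_all add: simps)
  have rows: "?d 1 1 + ?d 1 5 = 0" "?d 2 2 + ?d 2 5 = 0" "?d 3 3 + ?d 3 5 = 0" "?d 4 4 + ?d 4 5 = 0"
    using target[of 1 5] target[of 2 5] target[of 3 5] target[of 4 5] edges near far
    by (simp_all add: simps add_divide_distrib[symmetric])
  have "?d 1 1 = - ?d 1 5"
    using rows(1) by (simp add: eq_neg_iff_add_eq_0)
  moreover have "p * ?d 1 5 = 0"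
    using target[of 1 2] edges near calculation by (simp add: simps algebra_simps)
  ultimately have col5: "?d 1 5 = 0" "?d 1 1 = 0" "?d 2 5 = 0" "?d 3 5 = 0" "?d 4 5 = 0"
    using to5 \<open>p \<noteq> 0\<close> by simp_all
  have diag: "?d 2 2 = 0" "?d 3 3 = 0" "?d 4 4 = 0" "?d 5 5 = 0"
    using rows col5 target[of 5 1] near by (simp_all add: simps add_divide_distrib[symmetric])
  have "i \<in> {1, 2, 3, 4, 5}" "k \<in> {1, 2, 3, 4, 5}"
    using assms(6,7) by auto
  then show ?thesis
    using edges near far col5 diag by auto
qed

theorem mainTheorem13:
  fixes \<alpha> \<beta> \<gamma> :: "'a::field"
  assumes char: "(2::'a) \<noteq> 0"
    and "\<alpha> \<noteq> 1/2" and "\<beta> \<noteq> 1/2" and "\<gamma> \<noteq> 1/2"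
  shows "LV_Der (chain_consts \<alpha> \<beta> \<gamma>) = {(\<lambda>u. (\<lambda>k. 0))}"
proof (intro equalityI subsetI)
  fix D
  assume "D \<in> LV_Der (chain_consts \<alpha> \<beta> \<gamma>)"
  then have D: "D \<in> LV_Der (chain_consts (1/2 + (\<alpha> - 1/2)) (1/2 + (\<beta> - 1/2)) (1/2 + (\<gamma> - 1/2)))"
    by simp
  have "D = (\<lambda>u k. 0)"
    using assms by (intro LV_Der_eq_zero_if_basis_coords[OF D] chain_Der_basis_coords_zero[OF D]) auto
  then show "D \<in> {\<lambda>u k. 0}" by simp
qed (simp add: zero_in_LV_Der)

end
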